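(* Let $G=\langle b\rangle\wr\langle a\rangle$ be the restricted wreath product of two infinite cyclic groups $\langle b\rangle\cong\langle a\rangle\cong\mathbb Z$ (so $G\cong\mathbb Z\wr\mathbb Z$). Then the bijection $f\colon\{a^n\mid n\in\mathbb N\}\to\mathbb N$, $a^n\mapsto n$, is an interpretation with parameters of $(\mathbb N,+,\times)$ in the group $(G,\cdot)$.
   Context: The restricted wreath product $\langle b\rangle\wr\langle a\rangle$ is the group $H\rtimes\langle a\rangle$ where $H$ is the free abelian group with basis $(a^{-k}ba^k)_{k\in\mathbb Z}$ and $a$ acts by conjugation shifting the basis. Groups are first-order structures in the language with one binary function symbol. An interpretation with parameters of $M$ in $N$ is a pair $(n,f)$, $f$ a surjection from a subset of $N^n$ onto $M$, such that for every $X\subseteq M^k$ definable in $M$ without parameters, the preimage of $X$ under the coordinatewise map $f^{\underline k}$ is definable in $N$ with parameters (equivalently: domain, kernel of $f$ and preimages of graphs of the basic operations of $M$ are definable with parameters). *)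

theory Defs
  imports Main "HOL-Algebra.Group"
begin

text \<open>Elements are pairs (h, n) standing for h * a^n, where h : int => int is a finitely
  supported function giving the exponents of the basis elements e_k = a^(-k) b a^k of H.
  Conjugation a^n e_k a^(-n) = e_(k-n), hence
  (h, n) * (h', m) = (\<lambda>j. h j + h' (j + n), n + m).\<close>

definition wr_ZZ :: "((int \<Rightarrow> int) \<times> int) monoid" where
  "wr_ZZ = \<lparr> carrier = {(h, n). finite {j. h j \<noteq> 0}},
             mult = (\<lambda>(h, n) (h', m). (\<lambda>j. h j + h' (j + n), n + m)),
             one = (\<lambda>_. 0, 0) \<rparr>"

definition wr_a :: "(int \<Rightarrow> int) \<times> int" where
  "wr_a = (\<lambda>_. 0, 1)"

definition wr_b :: "(int \<Rightarrow> int) \<times> int" where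
  "wr_b = (\<lambda>j. if j = 0 then 1 else 0, 0)"

datatype gterm = GVar nat | GMul gterm gterm

datatype gform = GEq gterm gterm | GNeg gform | GConj gform gform | GEx nat gform

fun geval :: "('a \<Rightarrow> 'a \<Rightarrow> 'a) \<Rightarrow> (nat \<Rightarrow> 'a) \<Rightarrow> gterm \<Rightarrow> 'a" where
  "geval m e (GVar i) = e i"
| "geval m e (GMul s t) = m (geval m e s) (geval m e t)"

fun gsat :: "'a set \<Rightarrow> ('a \<Rightarrow> 'a \<Rightarrow> 'a) \<Rightarrow> (nat \<Rightarrow> 'a) \<Rightarrow> gform \<Rightarrow> bool" where
  "gsat U m e (GEq s t) = (geval m e s = geval m e t)"
| "gsat U m e (GNeg \<phi>) = (\<not> gsat U m e \<phi>)"
| "gsat U m e (GConj \<phi> \<psi>) = (gsat U m e \<phi> \<and> gsat U m e \<psi>)"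
| "gsat U m e (GEx i \<phi>) = (\<exists>x\<in>U. gsat U m (e(i := x)) \<phi>)"

definition group_definable_params :: "'a set \<Rightarrow> ('a \<Rightarrow> 'a \<Rightarrow> 'a) \<Rightarrow> nat \<Rightarrow> 'a list set \<Rightarrow> bool" where
  "group_definable_params U m k X \<longleftrightarrow>
     (\<exists>\<phi> (p :: nat \<Rightarrow> 'a). range p \<subseteq> U \<and>
        X = {xs. length xs = k \<and> set xs \<subseteq> U \<and> gsat U m (\<lambda>i. if i < k then xs ! i else p i) \<phi>})"

datatype aterm = AVar nat | APlus aterm aterm | ATimes aterm aterm

datatype aform = AEq aterm aterm | ANeg aform | AConj aform aform | AEx nat aform

fun aeval :: "(nat \<Rightarrow> nat) \<Rightarrow> aterm \<Rightarrow> nat" where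
  "aeval e (AVar i) = e i"
| "aeval e (APlus s t) = aeval e s + aeval e t"
| "aeval e (ATimes s t) = aeval e s * aeval e t"

fun asat :: "(nat \<Rightarrow> nat) \<Rightarrow> aform \<Rightarrow> bool" where
  "asat e (AEq s t) = (aeval e s = aeval e t)"
| "asat e (ANeg \<phi>) = (\<not> asat e \<phi>)"
| "asat e (AConj \<phi> \<psi>) = (asat e \<phi> \<and> asat e \<psi>)"
| "asat e (AEx i \<phi>) = (\<exists>x. asat (e(i := x)) \<phi>)"

fun avars_t :: "aterm \<Rightarrow> nat set" where
  "avars_t (AVar i) = {i}"
| "avars_t (APlus s t) = avars_t s \<union> avars_t t"
| "avars_t (ATimes s t) = avars_t s \<union> avars_t t"

fun afree :: "aform \<Rightarrow> nat set" where
  "afree (AEq s t) = avars_t s \<union> avars_t t"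
| "afree (ANeg \<phi>) = afree \<phi>"
| "afree (AConj \<phi> \<psi>) = afree \<phi> \<union> afree \<psi>"
| "afree (AEx i \<phi>) = afree \<phi> - {i}"

definition arith_definable :: "nat \<Rightarrow> nat list set \<Rightarrow> bool" where
  "arith_definable k X \<longleftrightarrow>
     (\<exists>\<phi>. afree \<phi> \<subseteq> {..<k} \<and>
        X = {xs. length xs = k \<and> asat (\<lambda>i. if i < k then xs ! i else 0) \<phi>})"

text \<open>(n, f) with domain D \<subseteq> U^n (lists of length n), f : D \<rightarrow> N surjective, such that the
  preimage under f^k of every parameter-free definable X \<subseteq> N^k is definable with
  parameters in (U, m), identifying (U^n)^k with U^(n*k) by concatenation.\<close>

definition interprets_arith_params ::
  "'a set \<Rightarrow> ('a \<Rightarrow> 'a \<Rightarrow> 'a) \<Rightarrow> nat \<Rightarrow> 'a list set \<Rightarrow> ('a list \<Rightarrow> nat) \<Rightarrow> bool" where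
  "interprets_arith_params U m n D f \<longleftrightarrow>
     D \<subseteq> {xs. length xs = n \<and> set xs \<subseteq> U} \<and>
     f ` D = UNIV \<and>
     (\<forall>k X. arith_definable k X \<longrightarrow>
        group_definable_params U m (n * k)
          {concat yss | yss. length yss = k \<and> set yss \<subseteq> D \<and> map f yss \<in> X})"

end

theory Submission
  imports Defs "HOL-Library.Infinite_Set" "HOL-Computational_Algebra.Primes"
begin

text \<open>The multiset ordering Multiset.mult (imported with the primes) would shadow the monoid
  operation mult used throughout.\<close>

hide_const (open) Multiset.mult

text \<open>
  Centralizers carry the arithmetic: the centralizer of a is <a>, that of b is the base
  group H, and an element (h, k) commuting with b a^n satisfies k = n * (sum of h).  This
  gives a formula mul_rel defining multiplication of exponents on <a> (addition is the group
  operation).  Lagrange's four-square theorem then defines the non-negative powers of a as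
  products of four squares.
\<close>

section \<open>Lagrange's four-square theorem\<close>

definition sum4sq :: "int \<Rightarrow> bool" where
  "sum4sq n \<longleftrightarrow> (\<exists>a b c d. n = a\<^sup>2 + b\<^sup>2 + c\<^sup>2 + d\<^sup>2)"

lemma euler_four_square_identity:
  fixes a b c d w x y z :: int
  shows "(a\<^sup>2 + b\<^sup>2 + c\<^sup>2 + d\<^sup>2) * (w\<^sup>2 + x\<^sup>2 + y\<^sup>2 + z\<^sup>2) =
    (a*w + b*x + c*y + d*z)\<^sup>2 + (a*x - b*w + c*z - d*y)\<^sup>2 +
    (a*y - b*z - c*w + d*x)\<^sup>2 + (a*z + b*y - c*x - d*w)\<^sup>2"
  by (simp add: power2_eq_square algebra_simps)

lemma sum4sq_mult: "sum4sq m \<Longrightarrow> sum4sq n \<Longrightarrow> sum4sq (m * n)"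
  unfolding sum4sq_def by (metis euler_four_square_identity)

text \<open>If 2n is a sum of four squares, pair the squares so that both pairs have even sums;
  then (a^2 + b^2)/2 = ((a+b)/2)^2 + ((a-b)/2)^2 exhibits n as a sum of four squares.\<close>

lemma sum4sq_half:
  assumes "sum4sq (2 * n)"
  shows "sum4sq n"
proof -
  have from_pairs: "sum4sq n"
    if ab: "even (a + b)" and cd: "even (c + d)"
      and sq: "2 * n = a\<^sup>2 + b\<^sup>2 + c\<^sup>2 + d\<^sup>2" for a b c d :: int
  proof -
    obtain u v where "a + b = 2 * u" "c + d = 2 * v"
      using ab cd unfolding dvd_def by (metis mult.commute)
    then have "a = 2*u - b" "c = 2*v - d" by auto
    with sq have "2 * n = 2 * (u\<^sup>2 + (u - b)\<^sup>2 + v\<^sup>2 + (v - d)\<^sup>2)"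
      by (simp add: power2_eq_square algebra_simps)
    then have "n = u\<^sup>2 + (u - b)\<^sup>2 + v\<^sup>2 + (v - d)\<^sup>2" by simp
    then show ?thesis unfolding sum4sq_def by blast
  qed
  obtain a b c d where sq: "2 * n = a\<^sup>2 + b\<^sup>2 + c\<^sup>2 + d\<^sup>2"
    using assms sum4sq_def by auto
  then have "even (a\<^sup>2 + b\<^sup>2 + c\<^sup>2 + d\<^sup>2)" by (metis dvd_triv_left)
  then have "even (a + b + c + d)" by simp
  then have "even (a + b) \<and> even (c + d) \<or> even (a + c) \<and> even (b + d)
      \<or> even (a + d) \<and> even (b + c)" by presburger
  then consider "even (a + b)" "even (c + d)" | "even (a + c)" "even (b + d)"
    | "even (a + d)" "even (b + c)" by blast
  then show ?thesis
  proof cases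
    case 1 then show ?thesis using from_pairs sq by blast
  next
    case 2 then show ?thesis using from_pairs[of a c b d] sq by (simp add: algebra_simps)
  next
    case 3 then show ?thesis using from_pairs[of a d b c] sq by (simp add: algebra_simps)
  qed
qed

lemma square_mod_prime_inj:
  fixes p x y :: nat
  assumes p: "prime p" and x: "2 * x < p" and y: "2 * y < p" and eq: "x\<^sup>2 mod p = y\<^sup>2 mod p"
  shows "x = y"
proof (rule ccontr)
  assume "x \<noteq> y"
  have "int (x\<^sup>2) mod int p = int (y\<^sup>2) mod int p" using eq by (metis of_nat_mod)
  then have "int p dvd int (y\<^sup>2) - int (x\<^sup>2)" by (metis mod_eq_dvd_iff)
  moreover have "int (y\<^sup>2) - int (x\<^sup>2) = (int y - int x) * (int y + int x)"
    by (simp add: power2_eq_square algebra_simps)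
  ultimately have "int p dvd (int y - int x) * (int y + int x)" by simp
  then have "int p dvd int y - int x \<or> int p dvd int y + int x"
    using p by (simp add: prime_dvd_mult_iff)
  then show False
  proof
    assume "int p dvd int y - int x"
    then have "\<bar>int p\<bar> \<le> \<bar>int y - int x\<bar>" using \<open>x \<noteq> y\<close> by (intro dvd_imp_le_int) auto
    then show False using x y by simp
  next
    assume "int p dvd int y + int x"
    then have "\<bar>int p\<bar> \<le> \<bar>int y + int x\<bar>" using \<open>x \<noteq> y\<close> by (intro dvd_imp_le_int) auto
    then show False using x y by simp
  qed
qed

text \<open>Pigeonhole: the (p+1)/2 values x^2 and the (p+1)/2 values -1-y^2 modulo an odd prime p
  cannot all be distinct, so p divides some x^2 + y^2 + 1 with small x, y.\<close>

lemma prime_dvd_two_squares_plus_one: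
  fixes p :: nat
  assumes p: "prime p" and odd: "odd p"
  shows "\<exists>x y. 2 * x < p \<and> 2 * y < p \<and> p dvd x\<^sup>2 + y\<^sup>2 + 1"
proof -
  define h where "h = (p - 1) div 2"
  have p1: "p > 1" using p prime_gt_1_nat by blast
  have hp: "2 * h + 1 = p" using odd p1 unfolding h_def by presburger
  define A where "A = (\<lambda>x. x\<^sup>2 mod p) ` {..h}"
  define B where "B = (\<lambda>y. p - 1 - y\<^sup>2 mod p) ` {..h}"
  have "inj_on (\<lambda>x. x\<^sup>2 mod p) {..h}"
    by (rule inj_onI) (rule square_mod_prime_inj[OF p], use hp in auto)
  then have cA: "card A = h + 1" unfolding A_def by (simp add: card_image)
  have "inj_on (\<lambda>y. p - 1 - y\<^sup>2 mod p) {..h}"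
  proof (rule inj_onI)
    fix x y assume xy: "x \<in> {..h}" "y \<in> {..h}" "p - 1 - x\<^sup>2 mod p = p - 1 - y\<^sup>2 mod p"
    have "x\<^sup>2 mod p < p" "y\<^sup>2 mod p < p" using p1 by auto
    then have "x\<^sup>2 mod p = y\<^sup>2 mod p" using xy(3) by linarith
    then show "x = y" by (rule square_mod_prime_inj[OF p, rotated 2]) (use xy hp in auto)
  qed
  then have cB: "card B = h + 1" unfolding B_def by (simp add: card_image)
  have "A \<union> B \<subseteq> {..<p}" unfolding A_def B_def using p1 by auto
  then have "card (A \<union> B) \<le> p" by (metis card_lessThan card_mono finite_lessThan)
  moreover have "card (A \<union> B) + card (A \<inter> B) = card A + card B"
    using card_Un_Int[of A B] by (simp add: A_def B_def)
  ultimately have "A \<inter> B \<noteq> {}" using cA cB hp by auto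
  then obtain x y where xy: "x \<le> h" "y \<le> h" "x\<^sup>2 mod p = p - 1 - y\<^sup>2 mod p"
    unfolding A_def B_def by auto
  have "y\<^sup>2 mod p < p" using p1 by auto
  then have "x\<^sup>2 mod p + y\<^sup>2 mod p + 1 = p" using xy(3) by linarith
  then have "(x\<^sup>2 + y\<^sup>2 + 1) mod p = 0" by (metis mod_add_left_eq mod_add_right_eq mod_self)
  then show ?thesis using xy hp by (intro exI[of _ x] exI[of _ y]) auto
qed

lemma centered_residue:
  fixes M K x :: int
  assumes "M = 2 * K + 1" "K \<ge> 0"
  shows "\<exists>t. \<bar>x - M * t\<bar> \<le> K"
proof -
  have "M > 0" using assms by simp
  then have "0 \<le> (x + K) mod M" "(x + K) mod M < M" by auto
  moreover have "x + K = M * ((x + K) div M) + (x + K) mod M" by simp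
  ultimately have "\<bar>x - M * ((x + K) div M)\<bar> \<le> K" using assms by linarith
  then show ?thesis by blast
qed

text \<open>The squares are reduced to
  centered residues y_i modulo M; their sum is M * r, and Euler's identity applied to the
  two representations yields four squares divisible by M^2 summing to M^2 * (P * r).\<close>

lemma four_square_descent:
  fixes M P :: int
  assumes odd: "odd M" and M1: "M > 1" and sq: "sum4sq (M * P)" and ndvd: "\<not> M dvd P"
  shows "\<exists>r. 0 < r \<and> r < M \<and> sum4sq (r * P)"
proof -
  define K where "K = M div 2"
  have MK: "M = 2 * K + 1" using odd unfolding K_def by presburger
  with M1 have K1: "K \<ge> 1" by simp
  obtain x1 x2 x3 x4 where x: "M * P = x1\<^sup>2 + x2\<^sup>2 + x3\<^sup>2 + x4\<^sup>2"
    using sq unfolding sum4sq_def by blast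
  have "\<exists>t. \<bar>x - M * t\<bar> \<le> K" for x using centered_residue[OF MK] K1 by simp
  then obtain t1 t2 t3 t4 where t: "\<bar>x1 - M * t1\<bar> \<le> K" "\<bar>x2 - M * t2\<bar> \<le> K"
    "\<bar>x3 - M * t3\<bar> \<le> K" "\<bar>x4 - M * t4\<bar> \<le> K" by metis
  define y1 y2 y3 y4 where "y1 = x1 - M * t1" "y2 = x2 - M * t2" "y3 = x3 - M * t3" "y4 = x4 - M * t4"
  define r where "r = P - 2 * (x1*t1 + x2*t2 + x3*t3 + x4*t4) + M * (t1\<^sup>2 + t2\<^sup>2 + t3\<^sup>2 + t4\<^sup>2)"
  have y_sum: "y1\<^sup>2 + y2\<^sup>2 + y3\<^sup>2 + y4\<^sup>2 = M * r"
  proof -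
    have "y1\<^sup>2 + y2\<^sup>2 + y3\<^sup>2 + y4\<^sup>2 = (x1\<^sup>2 + x2\<^sup>2 + x3\<^sup>2 + x4\<^sup>2)
        - M * (2 * (x1*t1 + x2*t2 + x3*t3 + x4*t4)) + M * (M * (t1\<^sup>2 + t2\<^sup>2 + t3\<^sup>2 + t4\<^sup>2))"
      unfolding y1_y2_y3_y4_def by (simp add: power2_eq_square algebra_simps)
    then show ?thesis unfolding x[symmetric] r_def by (simp add: algebra_simps)
  qed
  have "y1\<^sup>2 \<le> K\<^sup>2" "y2\<^sup>2 \<le> K\<^sup>2" "y3\<^sup>2 \<le> K\<^sup>2" "y4\<^sup>2 \<le> K\<^sup>2"
    using t K1 unfolding y1_y2_y3_y4_def by (simp_all add: power2_le_iff_abs_le)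
  moreover have "M * M = 4 * K\<^sup>2 + 4 * K + 1" using MK by (simp add: power2_eq_square algebra_simps)
  ultimately have "M * r < M * M" using y_sum K1 by linarith
  then have r_less: "r < M" using M1 by simp
  have "0 \<le> M * r" unfolding y_sum[symmetric] by simp
  then have r_nonneg: "r \<ge> 0" using M1 by (simp add: zero_le_mult_iff)
  have r_nonzero: "r \<noteq> 0"
  proof
    assume "r = 0"
    then have "y1\<^sup>2 + y2\<^sup>2 + y3\<^sup>2 + y4\<^sup>2 = 0" using y_sum by simp
    then have "y1\<^sup>2 = 0 \<and> y2\<^sup>2 = 0 \<and> y3\<^sup>2 = 0 \<and> y4\<^sup>2 = 0"
      using zero_le_power2[of y1] zero_le_power2[of y2] zero_le_power2[of y3] zero_le_power2[of y4]
      by linarith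
    then have "y1 = 0 \<and> y2 = 0 \<and> y3 = 0 \<and> y4 = 0" by simp
    then have "M * P = M * (M * (t1\<^sup>2 + t2\<^sup>2 + t3\<^sup>2 + t4\<^sup>2))"
      using x unfolding y1_y2_y3_y4_def by (simp add: power2_eq_square algebra_simps)
    then have "P = M * (t1\<^sup>2 + t2\<^sup>2 + t3\<^sup>2 + t4\<^sup>2)" using M1 by simp
    then show False using ndvd by simp
  qed
  define E1 where "E1 = P - (x1*t1 + x2*t2 + x3*t3 + x4*t4)"
  define E2 where "E2 = - (x1*t2 - x2*t1 + x3*t4 - x4*t3)"
  define E3 where "E3 = - (x1*t3 - x2*t4 - x3*t1 + x4*t2)"
  define E4 where "E4 = - (x1*t4 + x2*t3 - x3*t2 - x4*t1)"
  have z1: "x1*y1 + x2*y2 + x3*y3 + x4*y4 = M * E1"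
  proof -
    have "x1*y1 + x2*y2 + x3*y3 + x4*y4
        = (x1\<^sup>2 + x2\<^sup>2 + x3\<^sup>2 + x4\<^sup>2) - M * (x1*t1 + x2*t2 + x3*t3 + x4*t4)"
      unfolding y1_y2_y3_y4_def by (simp add: power2_eq_square algebra_simps)
    then show ?thesis unfolding x[symmetric] E1_def by (simp add: algebra_simps)
  qed
  have z2: "x1*y2 - x2*y1 + x3*y4 - x4*y3 = M * E2"
    and z3: "x1*y3 - x2*y4 - x3*y1 + x4*y2 = M * E3"
    and z4: "x1*y4 + x2*y3 - x3*y2 - x4*y1 = M * E4"
    unfolding y1_y2_y3_y4_def E2_def E3_def E4_def by (simp_all add: algebra_simps)
  have "M * M * (P * r) = (x1\<^sup>2 + x2\<^sup>2 + x3\<^sup>2 + x4\<^sup>2) * (y1\<^sup>2 + y2\<^sup>2 + y3\<^sup>2 + y4\<^sup>2)"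
    unfolding x[symmetric] y_sum by (simp add: algebra_simps)
  also have "\<dots> = (M * E1)\<^sup>2 + (M * E2)\<^sup>2 + (M * E3)\<^sup>2 + (M * E4)\<^sup>2"
    unfolding euler_four_square_identity z1 z2 z3 z4 ..
  also have "\<dots> = M * M * (E1\<^sup>2 + E2\<^sup>2 + E3\<^sup>2 + E4\<^sup>2)"
    by (simp add: power2_eq_square algebra_simps)
  finally have "P * r = E1\<^sup>2 + E2\<^sup>2 + E3\<^sup>2 + E4\<^sup>2" using M1 by simp
  then have "r * P = E1\<^sup>2 + E2\<^sup>2 + E3\<^sup>2 + E4\<^sup>2" by (simp add: mult.commute)
  moreover have "0 < r" using r_nonneg r_nonzero by simp
  ultimately show ?thesis using r_less unfolding sum4sq_def by blast
qed

text \<open>Every prime is a sum of four squares: some multiple m p with 0 < m < p is one, and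
  the least such m equals 1 by halving (m even) or Euler's descent (m odd).\<close>

lemma prime_sum4sq:
  fixes p :: nat
  assumes p: "prime p"
  shows "sum4sq (int p)"
proof (cases "p = 2")
  case True
  have "int p = 1\<^sup>2 + 1\<^sup>2 + 0\<^sup>2 + 0\<^sup>2" using True by simp
  then show ?thesis unfolding sum4sq_def by blast
next
  case False
  have p2: "p > 2" using prime_gt_1_nat[OF p] False by linarith
  then have odd: "odd p" using p prime_odd_nat by blast
  have descent: "sum4sq (int p)"
    if "0 < m" "m < p" "sum4sq (int m * int p)" for m :: nat
    using that
  proof (induction m rule: less_induct)
    case (less m)
    show ?case
    proof (cases "m = 1")
      case True
      then show ?thesis using less.prems by simp
    next
      case m1: False
      show ?thesis
      proof (cases "even m")
        case True
        then obtain k where k: "m = 2 * k" by blast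
        have "sum4sq (2 * (int k * int p))" using less.prems k by (simp add: algebra_simps)
        then have "sum4sq (int k * int p)" by (rule sum4sq_half)
        then show ?thesis using less.IH[of k] less.prems k by simp
      next
        case False
        have "\<not> m dvd p" using p m1 less.prems(2) prime_nat_iff by auto
        then have "\<not> int m dvd int p" by simp
        moreover have "int m > 1" "odd (int m)" using m1 less.prems(1) False by auto
        ultimately obtain r where r: "0 < r" "r < int m" "sum4sq (r * int p)"
          using four_square_descent[of "int m" "int p"] less.prems(3) by blast
        then show ?thesis using less.IH[of "nat r"] less.prems by simp
      qed
    qed
  qed
  obtain x y where xy: "2 * x < p" "2 * y < p" "p dvd x\<^sup>2 + y\<^sup>2 + 1"
    using prime_dvd_two_squares_plus_one[OF p odd] by blast
  define m where "m = (x\<^sup>2 + y\<^sup>2 + 1) div p"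
  have mp: "m * p = x\<^sup>2 + y\<^sup>2 + 1" using xy(3) unfolding m_def by simp
  have "(2 * x)\<^sup>2 < p\<^sup>2" "(2 * y)\<^sup>2 < p\<^sup>2"
    using xy by (intro power_strict_mono; simp)+
  then have "4 * x\<^sup>2 < p\<^sup>2" "4 * y\<^sup>2 < p\<^sup>2" by simp_all
  moreover have "2 * 2 \<le> p * p" using p2 by (intro mult_le_mono) auto
  ultimately have "4 * (m * p) < 4 * (p * p)" unfolding mp by (simp add: power2_eq_square)
  then have "m < p" by simp
  moreover have "0 < m" using mp by (cases m) auto
  moreover have "int m * int p = (int x)\<^sup>2 + (int y)\<^sup>2 + 1\<^sup>2 + 0\<^sup>2"
    using arg_cong[OF mp, of int] by simp
  then have "sum4sq (int m * int p)" unfolding sum4sq_def by blast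
  ultimately show ?thesis using descent by blast
qed

theorem four_squares: "\<exists>a b c d :: nat. n = a\<^sup>2 + b\<^sup>2 + c\<^sup>2 + d\<^sup>2"
proof -
  have "sum4sq (int n)"
  proof (induction n rule: prime_divisors_induct)
    case zero
    have "int 0 = 0\<^sup>2 + 0\<^sup>2 + 0\<^sup>2 + 0\<^sup>2" by simp
    then show ?case unfolding sum4sq_def by blast
  next
    case (unit x)
    then have "int x = 1\<^sup>2 + 0\<^sup>2 + 0\<^sup>2 + 0\<^sup>2" by simp
    then show ?case unfolding sum4sq_def by blast
  next
    case (factor p x)
    have "int (p * x) = int p * int x" by simp
    then show ?case using sum4sq_mult[OF prime_sum4sq[OF factor(1)] factor(2)] by simp
  qed
  then obtain a b c d where "int n = a\<^sup>2 + b\<^sup>2 + c\<^sup>2 + d\<^sup>2" unfolding sum4sq_def by blast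
  moreover have "int ((nat \<bar>z\<bar>)\<^sup>2) = z\<^sup>2" for z :: int by simp
  ultimately have "int n = int ((nat \<bar>a\<bar>)\<^sup>2 + (nat \<bar>b\<bar>)\<^sup>2 + (nat \<bar>c\<bar>)\<^sup>2 + (nat \<bar>d\<bar>)\<^sup>2)"
    by (simp only: of_nat_add)
  then show ?thesis by (intro exI) (simp only: of_nat_eq_iff)
qed


section \<open>Finitely supported functions and their coefficient sums\<close>

text \<open>An element of the base group H is a finitely supported h : Z -> Z (the exponents of the
  basis elements); the coefficient sum is the abelianisation map H -> Z.\<close>

definition finsupp :: "(int \<Rightarrow> int) \<Rightarrow> bool" where
  "finsupp h \<longleftrightarrow> finite {j. h j \<noteq> 0}"

definition coeff_sum :: "(int \<Rightarrow> int) \<Rightarrow> int" where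
  "coeff_sum h = sum h {j. h j \<noteq> 0}"

definition delta :: "int \<Rightarrow> int \<Rightarrow> int" where
  "delta c j = (if j = c then 1 else 0)"

lemma coeff_sum_eq_sum: "finite S \<Longrightarrow> {j. h j \<noteq> 0} \<subseteq> S \<Longrightarrow> coeff_sum h = sum h S"
  unfolding coeff_sum_def by (rule sum.mono_neutral_left) auto

lemma finsupp_add: "finsupp f \<Longrightarrow> finsupp g \<Longrightarrow> finsupp (\<lambda>j. f j + g j)"
  unfolding finsupp_def by (rule finite_subset[of _ "{j. f j \<noteq> 0} \<union> {j. g j \<noteq> 0}"]) auto

lemma finsupp_mult: "finsupp f \<Longrightarrow> finsupp (\<lambda>j. c j * f j)"
  unfolding finsupp_def by (rule finite_subset) auto

lemma finsupp_shift:
  assumes "finsupp f"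
  shows "finsupp (\<lambda>j. f (j + n))"
proof -
  have "{j. f (j + n) \<noteq> 0} = (\<lambda>j. j - n) ` {j. f j \<noteq> 0}"
    by (auto simp: image_iff) (metis add_diff_cancel_right')
  then show ?thesis using assms by (simp add: finsupp_def)
qed

lemma finsupp_delta: "finsupp (delta c)"
  unfolding finsupp_def delta_def by (rule finite_subset[of _ "{c}"]) auto

lemma coeff_sum_add:
  assumes fin: "finsupp f" "finsupp g"
  shows "coeff_sum (\<lambda>j. f j + g j) = coeff_sum f + coeff_sum g"
proof -
  define S where "S = {j. f j \<noteq> 0} \<union> {j. g j \<noteq> 0}"
  have S: "finite S" using fin unfolding S_def finsupp_def by simp
  have "coeff_sum (\<lambda>j. f j + g j) = sum (\<lambda>j. f j + g j) S"
    by (rule coeff_sum_eq_sum[OF S]) (auto simp: S_def)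
  also have "\<dots> = sum f S + sum g S" by (simp add: sum.distrib)
  also have "\<dots> = coeff_sum f + coeff_sum g"
    using coeff_sum_eq_sum[OF S, of f] coeff_sum_eq_sum[OF S, of g] by (simp add: S_def)
  finally show ?thesis .
qed

lemma coeff_sum_shift:
  assumes "finsupp f"
  shows "coeff_sum (\<lambda>j. f (j + n)) = coeff_sum f"
proof -
  have "(\<lambda>j. j + n) ` {j. f (j + n) \<noteq> 0} = {j. f j \<noteq> 0}"
    by (auto simp: image_iff) (metis diff_add_cancel)
  then have "coeff_sum f = sum f ((\<lambda>j. j + n) ` {j. f (j + n) \<noteq> 0})"
    by (simp add: coeff_sum_def)
  also have "\<dots> = coeff_sum (\<lambda>j. f (j + n))"
    by (subst sum.reindex) (auto simp: inj_on_def coeff_sum_def)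
  finally show ?thesis by simp
qed

lemma coeff_sum_neg: "coeff_sum (\<lambda>j. - f j) = - coeff_sum f"
  unfolding coeff_sum_def by (simp add: sum_negf)

lemma coeff_sum_cmult: "coeff_sum (\<lambda>j. c * f j) = c * coeff_sum f"
  by (cases "c = 0") (simp_all add: coeff_sum_def sum_distrib_left)

lemma coeff_sum_delta: "coeff_sum (delta c) = 1"
  by (subst coeff_sum_eq_sum[of "{c}"]) (auto simp: delta_def)

lemma moment_delta: "coeff_sum (\<lambda>j. j * delta c j) = c"
  by (subst coeff_sum_eq_sum[of "{c}"]) (auto simp: delta_def)

lemma moment_shift:
  assumes "finsupp f"
  shows "coeff_sum (\<lambda>j. j * f (j + n)) = coeff_sum (\<lambda>j. j * f j) - n * coeff_sum f"
proof -
  have "coeff_sum (\<lambda>j. j * f (j + n)) = coeff_sum (\<lambda>j. (j - n) * f j)"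
    using coeff_sum_shift[OF finsupp_mult[OF assms], of "\<lambda>j. j - n" n] by simp
  also have "\<dots> = coeff_sum (\<lambda>j. j * f j + (- n) * f j)"
    by (simp add: algebra_simps)
  also have "\<dots> = coeff_sum (\<lambda>j. j * f j) + coeff_sum (\<lambda>j. (- n) * f j)"
    using coeff_sum_add[OF finsupp_mult[OF assms, of "\<lambda>j. j"]
        finsupp_mult[OF assms, of "\<lambda>_. - n"]] by simp
  also have "\<dots> = coeff_sum (\<lambda>j. j * f j) - n * coeff_sum f"
    using coeff_sum_cmult[of "- n" f] by simp
  finally show ?thesis .
qed

text \<open>A finitely supported function with coefficient sum 0 is the discrete derivative
  g j - g (j + 1) of a finitely supported g, namely of its tail sums.\<close>

lemma coeff_sum_zero_telescope:
  assumes fin: "finsupp d" and zero: "coeff_sum d = 0"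
  shows "\<exists>g. finsupp g \<and> (\<forall>j. g j - g (j + 1) = d j)"
proof -
  obtain R where R: "abs ` {j. d j \<noteq> 0} \<subseteq> {..<R}"
    using fin finite_int_iff_bounded unfolding finsupp_def by blast
  then have outside: "d j = 0" if "j < - R \<or> j > R" for j using that by force
  define g where "g j = sum d {j..R}" for j
  have derivative: "g j - g (j + 1) = d j" for j
  proof (cases "j \<le> R")
    case True
    then have "{j..R} = insert j {j+1..R}" by auto
    then show ?thesis by (simp add: g_def)
  next
    case False
    then show ?thesis by (simp add: g_def outside)
  qed
  have g_outside: "g j = 0" if "j < - R \<or> j > R" for j
  proof (cases "j > R")
    case False
    then have "j < - R" using that by simp
    have "{i. d i \<noteq> 0} \<subseteq> {j..R}"
    proof
      fix i assume "i \<in> {i. d i \<noteq> 0}"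
      then have "- R \<le> i \<and> i \<le> R" using outside by (meson CollectD not_less)
      then show "i \<in> {j..R}" using \<open>j < - R\<close> by simp
    qed
    then have "coeff_sum d = g j"
      unfolding g_def by (rule coeff_sum_eq_sum[OF finite_atLeastAtMost_int])
    then show ?thesis using zero by simp
  qed (simp add: g_def)
  have "{j. g j \<noteq> 0} \<subseteq> {-R..R}"
  proof
    fix j assume "j \<in> {j. g j \<noteq> 0}"
    then have "\<not> (j < - R \<or> j > R)" using g_outside by auto
    then show "j \<in> {-R..R}" by simp
  qed
  then have "finsupp g" unfolding finsupp_def by (rule finite_subset) simp
  with derivative show ?thesis by blast
qed

section \<open>Computations in Z wr Z\<close>

type_synonym wr_elem = "(int \<Rightarrow> int) \<times> int"

lemma wr_mult: "mult wr_ZZ (h, n) (h', m) = (\<lambda>j. h j + h' (j + n), n + m)"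
  by (simp add: wr_ZZ_def)

lemma wr_one: "one wr_ZZ = (\<lambda>_. 0, 0)"
  by (simp add: wr_ZZ_def)

lemma wr_carrier: "(h, n) \<in> carrier wr_ZZ \<longleftrightarrow> finsupp h"
  by (simp add: wr_ZZ_def finsupp_def)

abbreviation wr_prod :: "wr_elem \<Rightarrow> wr_elem \<Rightarrow> wr_elem"
    (infixl "\<cdot>" 70)
  where "x \<cdot> y \<equiv> mult wr_ZZ x y"

lemma wr_monoid: "monoid wr_ZZ"
proof (rule monoidI)
  fix x y z :: wr_elem
  show "x \<in> carrier wr_ZZ \<Longrightarrow> y \<in> carrier wr_ZZ \<Longrightarrow> x \<cdot> y \<in> carrier wr_ZZ"
    by (cases x; cases y) (simp add: wr_mult wr_carrier finsupp_add finsupp_shift)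
  show "(x \<cdot> y) \<cdot> z = x \<cdot> (y \<cdot> z)"
    by (cases x; cases y; cases z) (simp add: wr_mult algebra_simps)
  show "one wr_ZZ \<cdot> x = x" "x \<cdot> one wr_ZZ = x"
    by (cases x; simp add: wr_mult wr_one)+
qed (simp add: wr_one wr_carrier finsupp_def)

lemma wr_b_eq: "wr_b = (delta 0, 0)"
  by (simp add: wr_b_def delta_def fun_eq_iff)

definition apow :: "int \<Rightarrow> wr_elem" where
  "apow k = (\<lambda>_. 0, k)"

lemma apow_mult: "apow k \<cdot> apow l = apow (k + l)"
  by (simp add: apow_def wr_mult)

lemma apow_carrier: "apow k \<in> carrier wr_ZZ"
  by (simp add: apow_def wr_carrier finsupp_def)

lemma apow_inj: "apow k = apow l \<longleftrightarrow> k = l"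
  by (simp add: apow_def)

definition enc :: "nat \<Rightarrow> wr_elem" where
  "enc n = apow (int n)"

lemma wr_a_pow: "wr_a [^]\<^bsub>wr_ZZ\<^esub> n = enc n"
  by (induction n) (simp_all add: wr_one wr_a_def enc_def apow_def wr_mult)

lemma enc_mult: "enc m \<cdot> enc n = enc (m + n)"
  by (simp add: enc_def apow_mult)

lemma inj_enc: "inj enc"
  by (simp add: inj_on_def enc_def apow_inj)

lemma enc_carrier: "enc n \<in> carrier wr_ZZ"
  by (simp add: enc_def apow_carrier)

text \<open>The centralizer of b is the base group H, and the centralizer of a is the cyclic group
  generated by a (a nonzero a-periodic function is not finitely supported).\<close>

lemma commutes_b_iff: "(h, n) \<cdot> wr_b = wr_b \<cdot> (h, n) \<longleftrightarrow> n = 0"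
proof -
  have "(h, n) \<cdot> wr_b = wr_b \<cdot> (h, n) \<longleftrightarrow> (\<forall>j. delta 0 (j + n) = delta 0 j)"
    by (simp add: wr_b_eq wr_mult fun_eq_iff algebra_simps)
  also have "\<dots> \<longleftrightarrow> n = 0"
    by (auto simp: delta_def)
  finally show ?thesis .
qed

lemma commutes_a_iff:
  assumes "x \<in> carrier wr_ZZ"
  shows "x \<cdot> wr_a = wr_a \<cdot> x \<longleftrightarrow> x \<in> range apow"
proof
  obtain h n where x: "x = (h, n)" by fastforce
  assume "x \<cdot> wr_a = wr_a \<cdot> x"
  then have "(\<lambda>j. h j) = (\<lambda>j. h (j + 1))" by (simp add: x wr_a_def wr_mult)
  then have periodic: "h (j + 1) = h j" for j by metis
  have const: "h j = h 0" for j
  proof (induction j rule: int_induct[where k=0])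
    case (step1 i) then show ?case using periodic[of i] by simp
  next
    case (step2 i) then show ?case using periodic[of "i - 1"] by simp
  qed simp
  have "h = (\<lambda>_. 0)"
  proof (rule ccontr)
    assume "h \<noteq> (\<lambda>_. 0)"
    then obtain j where "h j \<noteq> 0" by auto
    then have "h i \<noteq> 0" for i using const[of i] const[of j] by simp
    then have "{j. h j \<noteq> 0} = UNIV" by auto
    then show False using assms by (simp add: x wr_carrier finsupp_def)
  qed
  then show "x \<in> range apow" by (simp add: x apow_def)
qed (auto simp: apow_def wr_a_def wr_mult add.commute)

text \<open>An element (h, k) commuting with (delta 0, n) = b a^n satisfies
  k = n * (coefficient sum of h): compare the first moments of the two sides of the
  commutation relation.\<close>

lemma commutes_b_apow:
  assumes "(h, k) \<in> carrier wr_ZZ" and "(h, k) \<cdot> (delta 0, n) = (delta 0, n) \<cdot> (h, k)"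
  shows "k = n * coeff_sum h"
proof -
  have fin: "finsupp h" using assms(1) by (simp add: wr_carrier)
  have "(\<lambda>j. h j + delta 0 (j + k)) = (\<lambda>j. delta 0 j + h (j + n))"
    using assms(2) by (simp add: wr_mult)
  moreover have "delta 0 (j + k) = delta (- k) j" for j by (auto simp: delta_def)
  ultimately have "h j + delta (- k) j = delta 0 j + h (j + n)" for j by metis
  then have "coeff_sum (\<lambda>j. j * h j + j * delta (- k) j)
      = coeff_sum (\<lambda>j. j * delta 0 j + j * h (j + n))"
    by (simp add: distrib_left[symmetric])
  moreover have "coeff_sum (\<lambda>j. j * h j + j * delta (- k) j) = coeff_sum (\<lambda>j. j * h j) - k"
    using coeff_sum_add[OF finsupp_mult[OF fin] finsupp_mult[OF finsupp_delta]] moment_delta by simp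
  moreover have "coeff_sum (\<lambda>j. j * delta 0 j + j * h (j + n))
      = coeff_sum (\<lambda>j. j * h j) - n * coeff_sum h"
    using coeff_sum_add[OF finsupp_mult[OF finsupp_delta] finsupp_mult[OF finsupp_shift[OF fin]]]
      moment_delta moment_shift[OF fin] by simp
  ultimately show ?thesis by simp
qed

text \<open>Both coordinates of the homomorphism (h, n) |-> (coefficient sum of h, n) onto Z^2 scale
  under powers.\<close>

lemma wr_pow_invariants:
  assumes "(h, n) \<in> carrier wr_ZZ"
  shows "snd ((h, n) [^]\<^bsub>wr_ZZ\<^esub> m) = int m * n
    \<and> coeff_sum (fst ((h, n) [^]\<^bsub>wr_ZZ\<^esub> m)) = int m * coeff_sum h"
proof (induction m)
  case 0
  show ?case by (simp add: wr_one coeff_sum_def)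
next
  case (Suc m)
  obtain h' n' where p: "(h, n) [^]\<^bsub>wr_ZZ\<^esub> m = (h', n')" by fastforce
  have "finsupp h'" using monoid.nat_pow_closed[OF wr_monoid assms, of m] by (simp add: p wr_carrier)
  moreover have "finsupp h" using assms by (simp add: wr_carrier)
  ultimately show ?case
    using Suc p by (simp add: wr_mult coeff_sum_add finsupp_shift coeff_sum_shift algebra_simps)
qed

section \<open>Definable multiplication and the definable copy of N\<close>

text \<open>A first-order definition, with the parameters a and b, of multiplication of exponents
  on the cyclic subgroup generated by a.  For x = a^m, y = a^n, z = a^l the witness v = u1 y
  commutes with b a, so n is the coefficient sum of u1 \<in> H; likewise w = u2 z commutes with
  b a^m, so l = m * (coefficient sum of u2); and u1 a g = u2 g a with g \<in> H says that
  u1 and u2 have equal coefficient sums.  Hence the relation holds iff l = m * n.\<close>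

definition mul_rel :: "wr_elem \<Rightarrow> wr_elem \<Rightarrow> wr_elem \<Rightarrow> bool" where
  "mul_rel x y z \<longleftrightarrow> x \<cdot> wr_a = wr_a \<cdot> x \<and> y \<cdot> wr_a = wr_a \<cdot> y \<and> z \<cdot> wr_a = wr_a \<cdot> z \<and>
    (\<exists>v\<in>carrier wr_ZZ. \<exists>w\<in>carrier wr_ZZ. \<exists>u1\<in>carrier wr_ZZ. \<exists>u2\<in>carrier wr_ZZ. \<exists>g\<in>carrier wr_ZZ.
       v \<cdot> (wr_b \<cdot> wr_a) = (wr_b \<cdot> wr_a) \<cdot> v \<and> w \<cdot> (wr_b \<cdot> x) = (wr_b \<cdot> x) \<cdot> w \<and>
       u1 \<cdot> wr_b = wr_b \<cdot> u1 \<and> v = u1 \<cdot> y \<and> u2 \<cdot> wr_b = wr_b \<cdot> u2 \<and> w = u2 \<cdot> z \<and>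
       g \<cdot> wr_b = wr_b \<cdot> g \<and> (u1 \<cdot> wr_a) \<cdot> g = (u2 \<cdot> g) \<cdot> wr_a)"

lemma in_centralizer_b: "x \<cdot> wr_b = wr_b \<cdot> x \<Longrightarrow> \<exists>h. x = (h, 0)"
  by (cases x) (simp add: commutes_b_iff)

lemma mul_rel_sound:
  assumes car: "x \<in> carrier wr_ZZ" "y \<in> carrier wr_ZZ" "z \<in> carrier wr_ZZ" and rel: "mul_rel x y z"
  shows "\<exists>m n. x = apow m \<and> y = apow n \<and> z = apow (m * n)"
proof -
  from rel obtain v w u1 u2 g where
    comm_a: "x \<cdot> wr_a = wr_a \<cdot> x" "y \<cdot> wr_a = wr_a \<cdot> y" "z \<cdot> wr_a = wr_a \<cdot> z" and
    car': "v \<in> carrier wr_ZZ" "w \<in> carrier wr_ZZ" "g \<in> carrier wr_ZZ" and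
    v: "v \<cdot> (wr_b \<cdot> wr_a) = (wr_b \<cdot> wr_a) \<cdot> v" "v = u1 \<cdot> y" "u1 \<cdot> wr_b = wr_b \<cdot> u1" and
    w: "w \<cdot> (wr_b \<cdot> x) = (wr_b \<cdot> x) \<cdot> w" "w = u2 \<cdot> z" "u2 \<cdot> wr_b = wr_b \<cdot> u2" and
    g: "g \<cdot> wr_b = wr_b \<cdot> g" "(u1 \<cdot> wr_a) \<cdot> g = (u2 \<cdot> g) \<cdot> wr_a"
    unfolding mul_rel_def by blast
  obtain m n l where xyz: "x = apow m" "y = apow n" "z = apow l"
    using comm_a commutes_a_iff[OF car(1)] commutes_a_iff[OF car(2)] commutes_a_iff[OF car(3)]
    by auto
  obtain h1 h2 hg where u: "u1 = (h1, 0)" "u2 = (h2, 0)" "g = (hg, 0)"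
    using in_centralizer_b[OF v(3)] in_centralizer_b[OF w(3)] in_centralizer_b[OF g(1)] by blast
  have v_eq: "v = (h1, n)" and w_eq: "w = (h2, l)"
    using v(2) w(2) by (simp_all add: u xyz apow_def wr_mult)
  have fin: "finsupp h1" "finsupp h2" "finsupp hg"
    using car' v_eq w_eq u by (simp_all add: wr_carrier)
  have n: "n = 1 * coeff_sum h1"
    by (rule commutes_b_apow) (use car' v v_eq in \<open>simp_all add: wr_b_eq wr_a_def wr_mult\<close>)
  have l: "l = m * coeff_sum h2"
    by (rule commutes_b_apow) (use car' w w_eq in \<open>simp_all add: wr_b_eq xyz apow_def wr_mult\<close>)
  have "(\<lambda>j. h1 j + hg (j + 1)) = (\<lambda>j. h2 j + hg j)"
    using g(2) by (simp add: u wr_a_def wr_mult)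
  then have "coeff_sum h1 + coeff_sum hg = coeff_sum h2 + coeff_sum hg"
    using coeff_sum_add[OF fin(1) finsupp_shift[OF fin(3)]] coeff_sum_add[OF fin(2,3)]
      coeff_sum_shift[OF fin(3)] by metis
  then have "coeff_sum h1 = coeff_sum h2" by simp
  then show ?thesis using xyz n l by auto
qed

text \<open>Completeness: for y = a^n the witnesses are v = (b a)^n and w = (b a^m)^n, which commute
  with b a and b a^m and have coefficient sum n; their H-parts differ by a discrete
  derivative, which provides g.\<close>

lemma wr_pow_commutes: "x \<in> carrier wr_ZZ \<Longrightarrow> x [^]\<^bsub>wr_ZZ\<^esub> (n::nat) \<cdot> x = x \<cdot> x [^]\<^bsub>wr_ZZ\<^esub> n"
  using monoid.nat_pow_Suc2[OF wr_monoid] by (metis nat_pow_Suc)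

lemma mul_rel_complete: "mul_rel (apow m) (apow (int n)) (apow (m * int n))"
proof -
  define v where "v = (delta 0, 1) [^]\<^bsub>wr_ZZ\<^esub> n"
  define w where "w = (delta 0, m) [^]\<^bsub>wr_ZZ\<^esub> n"
  have car: "(delta 0, 1) \<in> carrier wr_ZZ" "(delta 0, m) \<in> carrier wr_ZZ"
    by (simp_all add: wr_carrier finsupp_delta)
  define hv hw where "hv = fst v" and "hw = fst w"
  have hv: "v = (hv, int n)" "coeff_sum hv = int n"
    using wr_pow_invariants[OF car(1), of n] unfolding v_def[symmetric] hv_def
    by (simp_all add: coeff_sum_delta prod_eq_iff)
  have hw: "w = (hw, m * int n)" "coeff_sum hw = int n"
    using wr_pow_invariants[OF car(2), of n] unfolding w_def[symmetric] hw_def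
    by (simp_all add: coeff_sum_delta prod_eq_iff)
  have v_car: "v \<in> carrier wr_ZZ" and w_car: "w \<in> carrier wr_ZZ"
    unfolding v_def w_def using car by (simp_all add: monoid.nat_pow_closed[OF wr_monoid])
  then have fin: "finsupp hv" "finsupp hw" using hv hw by (simp_all add: wr_carrier)
  have fin_neg: "finsupp (\<lambda>j. - hw j)" using fin(2) by (simp add: finsupp_def)
  have "coeff_sum (\<lambda>j. hv j + - hw j) = 0"
    using coeff_sum_add[OF fin(1) fin_neg] coeff_sum_neg[of hw] hv(2) hw(2) by simp
  then obtain hg where hg: "finsupp hg" "\<forall>j. hg j - hg (j + 1) = hv j + - hw j"
    using coeff_sum_zero_telescope[OF finsupp_add[OF fin(1) fin_neg]] by blast
  have "v \<cdot> (delta 0, 1) = (delta 0, 1) \<cdot> v" "w \<cdot> (delta 0, m) = (delta 0, m) \<cdot> w"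
    unfolding v_def w_def using car by (simp_all add: wr_pow_commutes)
  moreover have "wr_b \<cdot> wr_a = (delta 0, 1)" "wr_b \<cdot> apow m = (delta 0, m)"
    by (simp_all add: wr_b_eq wr_a_def apow_def wr_mult)
  moreover have "v = (hv, 0) \<cdot> apow (int n)" "w = (hw, 0) \<cdot> apow (m * int n)"
    using hv hw by (simp_all add: apow_def wr_mult)
  moreover have "(hv, 0) \<cdot> wr_a \<cdot> (hg, 0) = (hw, 0) \<cdot> (hg, 0) \<cdot> wr_a"
    using hg(2) by (simp add: wr_a_def wr_mult fun_eq_iff algebra_simps)
  moreover have "(h, 0) \<cdot> wr_b = wr_b \<cdot> (h, 0)" for h by (simp add: commutes_b_iff)
  moreover have "apow k \<cdot> wr_a = wr_a \<cdot> apow k" for k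
    using commutes_a_iff[OF apow_carrier] by blast
  moreover have "(hv, 0) \<in> carrier wr_ZZ" "(hw, 0) \<in> carrier wr_ZZ" "(hg, 0) \<in> carrier wr_ZZ"
    using fin hg(1) by (simp_all add: wr_carrier)
  ultimately show ?thesis unfolding mul_rel_def using v_car w_car by metis
qed

lemma mul_rel_enc:
  assumes "z \<in> carrier wr_ZZ"
  shows "mul_rel (enc m) (enc n) z \<longleftrightarrow> z = enc (m * n)"
proof
  assume "mul_rel (enc m) (enc n) z"
  then obtain m' n' where "enc m = apow m'" "enc n = apow n'" "z = apow (m' * n')"
    using mul_rel_sound[OF _ _ assms] apow_carrier unfolding enc_def by blast
  then show "z = enc (m * n)" by (simp add: enc_def apow_inj)
qed (simp add: enc_def mul_rel_complete)

text \<open>The squares a^(k*k), and by Lagrange's four-square theorem the non-negative powers of a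
  as the products of four such squares.\<close>

definition square_rel :: "wr_elem \<Rightarrow> bool" where
  "square_rel s \<longleftrightarrow> (\<exists>y\<in>carrier wr_ZZ. mul_rel y y s)"

lemma square_rel_iff:
  assumes "s \<in> carrier wr_ZZ"
  shows "square_rel s \<longleftrightarrow> (\<exists>k. s = apow (k * k))"
proof
  assume "square_rel s"
  then obtain y where "y \<in> carrier wr_ZZ" "mul_rel y y s" unfolding square_rel_def by blast
  then obtain m n where "y = apow m" "y = apow n" "s = apow (m * n)"
    using mul_rel_sound assms by blast
  then show "\<exists>k. s = apow (k * k)" by (auto simp: apow_inj)
next
  assume "\<exists>k. s = apow (k * k)"
  then obtain k where "s = apow (int (nat \<bar>k\<bar>) * int (nat \<bar>k\<bar>))" by force
  then show "square_rel s" unfolding square_rel_def using mul_rel_complete apow_carrier by blast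
qed

definition nat_rel :: "wr_elem \<Rightarrow> bool" where
  "nat_rel x \<longleftrightarrow> (\<exists>s1\<in>carrier wr_ZZ. \<exists>s2\<in>carrier wr_ZZ. \<exists>s3\<in>carrier wr_ZZ. \<exists>s4\<in>carrier wr_ZZ.
     square_rel s1 \<and> square_rel s2 \<and> square_rel s3 \<and> square_rel s4 \<and> x = s1 \<cdot> s2 \<cdot> s3 \<cdot> s4)"

lemma nat_rel_iff: "nat_rel x \<longleftrightarrow> x \<in> range enc"
proof
  assume "nat_rel x"
  then obtain s1 s2 s3 s4 where
    car: "s1 \<in> carrier wr_ZZ" "s2 \<in> carrier wr_ZZ" "s3 \<in> carrier wr_ZZ" "s4 \<in> carrier wr_ZZ" and
    sq: "square_rel s1" "square_rel s2" "square_rel s3" "square_rel s4" and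
    x: "x = s1 \<cdot> s2 \<cdot> s3 \<cdot> s4"
    unfolding nat_rel_def by blast
  obtain k1 k2 k3 k4 where
    "s1 = apow (k1 * k1)" "s2 = apow (k2 * k2)" "s3 = apow (k3 * k3)" "s4 = apow (k4 * k4)"
    using square_rel_iff car sq by metis
  then have "x = enc (nat (k1 * k1 + k2 * k2 + k3 * k3 + k4 * k4))"
    by (simp add: x apow_mult enc_def)
  then show "x \<in> range enc" by blast
next
  assume "x \<in> range enc"
  then obtain n where x: "x = apow (int n)" by (auto simp: enc_def)
  obtain c1 c2 c3 c4 :: nat where n: "n = c1\<^sup>2 + c2\<^sup>2 + c3\<^sup>2 + c4\<^sup>2"
    using four_squares by blast
  define sq where "sq c = apow (int c * int c)" for c
  have "square_rel (sq c)" "sq c \<in> carrier wr_ZZ" for c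
    unfolding sq_def using square_rel_iff apow_carrier by blast+
  moreover have "x = sq c1 \<cdot> sq c2 \<cdot> sq c3 \<cdot> sq c4"
    by (simp add: x n sq_def apow_mult power2_eq_square)
  ultimately show "nat_rel x" unfolding nat_rel_def by blast
qed

lemma interprets_by_encoding:
  assumes inj: "inj enc" and enc_in: "range enc \<subseteq> U"
    and definable: "\<And>k \<phi>. group_definable_params U m k
          (map enc ` {ns. length ns = k \<and> asat (\<lambda>i. if i < k then ns ! i else 0) \<phi>})"
  shows "interprets_arith_params U m 1 {[enc n] | n. True} (\<lambda>xs. THE n. xs = [enc n])"
proof -
  define D where "D = {[enc n] | n. True}"
  define f where "f = (\<lambda>xs. THE n. xs = [enc n])"
  have f_enc: "f [enc n] = n" for n unfolding f_def using inj by (auto dest: injD)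
  have subset_D: "set yss \<subseteq> D \<longleftrightarrow> (\<exists>ns. yss = map (\<lambda>n. [enc n]) ns)" for yss
    unfolding ex_map_conv D_def by blast
  have preimage: "{concat yss | yss. length yss = k \<and> set yss \<subseteq> D \<and> map f yss \<in> X} = map enc ` X"
    if "X \<subseteq> {ns. length ns = k}" for k X
  proof (intro equalityI subsetI)
    fix xs assume "xs \<in> {concat yss | yss. length yss = k \<and> set yss \<subseteq> D \<and> map f yss \<in> X}"
    then obtain ns where "xs = map enc ns" "ns \<in> X"
      unfolding subset_D by (auto simp: comp_def f_enc)
    then show "xs \<in> map enc ` X" by blast
  next
    fix xs assume "xs \<in> map enc ` X"
    then obtain ns where ns: "ns \<in> X" "xs = map enc ns" by blast
    then have "xs = concat (map (\<lambda>n. [enc n]) ns) \<and> length (map (\<lambda>n. [enc n]) ns) = k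
        \<and> set (map (\<lambda>n. [enc n]) ns) \<subseteq> D \<and> map f (map (\<lambda>n. [enc n]) ns) \<in> X"
      using that unfolding subset_D by (auto simp: comp_def f_enc)
    then show "xs \<in> {concat yss | yss. length yss = k \<and> set yss \<subseteq> D \<and> map f yss \<in> X}"
      by blast
  qed
  have "D \<subseteq> {xs. length xs = 1 \<and> set xs \<subseteq> U}" using enc_in by (auto simp: D_def)
  moreover have "f ` D = UNIV"
  proof -
    have "n \<in> f ` D" for n
    proof (rule image_eqI)
      show "n = f [enc n]" by (simp add: f_enc)
      show "[enc n] \<in> D" by (auto simp: D_def)
    qed
    then show ?thesis by blast
  qed
  moreover have "group_definable_params U m (1 * k)
      {concat yss | yss. length yss = k \<and> set yss \<subseteq> D \<and> map f yss \<in> X}"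
    if X_def: "arith_definable k X" for k X
  proof -
    obtain \<phi> where X: "X = {ns. length ns = k \<and> asat (\<lambda>i. if i < k then ns ! i else 0) \<phi>}"
      using X_def unfolding arith_definable_def by blast
    then have "{concat yss | yss. length yss = k \<and> set yss \<subseteq> D \<and> map f yss \<in> X} = map enc ` X"
      by (intro preimage) blast
    then show ?thesis using definable[of k \<phi>] X by simp
  qed
  ultimately show ?thesis unfolding interprets_arith_params_def D_def f_def by blast
qed

section \<open>Translation of arithmetic formulas into the group language\<close>

abbreviation wr_sat :: "(nat \<Rightarrow> wr_elem) \<Rightarrow> gform \<Rightarrow> bool" where
  "wr_sat \<equiv> gsat (carrier wr_ZZ) (mult wr_ZZ)"

text \<open>Layout of variables used by the translation, for a bound V: variables i < V hold codes
  enc (\<nu> i) of an arithmetic valuation \<nu>, variables V and V+1 hold the parameters a and b,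
  and variables from some F > V+1 on are used as auxiliary bound variables.\<close>

definition wr_params :: "nat \<Rightarrow> (nat \<Rightarrow> wr_elem) \<Rightarrow> bool" where
  "wr_params V e \<longleftrightarrow> e V = wr_a \<and> e (Suc V) = wr_b"

definition encodes :: "nat \<Rightarrow> (nat \<Rightarrow> nat) \<Rightarrow> (nat \<Rightarrow> wr_elem) \<Rightarrow> bool" where
  "encodes V \<nu> e \<longleftrightarrow> (\<forall>i<V. e i = enc (\<nu> i))"

definition gcomm :: "gterm \<Rightarrow> gterm \<Rightarrow> gform" where
  "gcomm s t = GEq (GMul s t) (GMul t s)"

text \<open>The variables F, ..., F+4 hold the witnesses v, w, u1, u2, g of mul_rel.\<close>

definition mul_form :: "nat \<Rightarrow> nat \<Rightarrow> nat \<Rightarrow> nat \<Rightarrow> nat \<Rightarrow> gform" where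
  "mul_form V x y z F = (let A = GVar V; B = GVar (Suc V); X = GVar x; Y = GVar y; Z = GVar z;
     Wv = GVar F; Ww = GVar (F+1); U1 = GVar (F+2); U2 = GVar (F+3); G = GVar (F+4) in
   GConj (gcomm X A) (GConj (gcomm Y A) (GConj (gcomm Z A)
    (GEx F (GEx (F+1) (GEx (F+2) (GEx (F+3) (GEx (F+4)
      (GConj (gcomm Wv (GMul B A)) (GConj (gcomm Ww (GMul B X)) (GConj (gcomm U1 B)
      (GConj (GEq Wv (GMul U1 Y)) (GConj (gcomm U2 B) (GConj (GEq Ww (GMul U2 Z))
      (GConj (gcomm G B) (GEq (GMul (GMul U1 A) G) (GMul (GMul U2 G) A)))))))))))))))))"

lemma mul_form_sem:
  assumes "wr_params V e" "Suc V < F" "x < F" "y < F" "z < F"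
  shows "wr_sat e (mul_form V x y z F) \<longleftrightarrow> mul_rel (e x) (e y) (e z)"
  using assms by (simp add: wr_params_def mul_form_def gcomm_def mul_rel_def Let_def)

definition square_form :: "nat \<Rightarrow> nat \<Rightarrow> nat \<Rightarrow> gform" where
  "square_form V s F = GEx F (mul_form V F F s (F+1))"

lemma square_form_sem:
  assumes "wr_params V e" "Suc V < F" "s < F"
  shows "wr_sat e (square_form V s F) \<longleftrightarrow> square_rel (e s)"
  using assms by (simp add: square_form_def mul_form_sem wr_params_def square_rel_def)

definition nat_form :: "nat \<Rightarrow> nat \<Rightarrow> nat \<Rightarrow> gform" where
  "nat_form V x F = GEx F (GEx (F+1) (GEx (F+2) (GEx (F+3)
     (GConj (square_form V F (F+4)) (GConj (square_form V (F+1) (F+4))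
     (GConj (square_form V (F+2) (F+4)) (GConj (square_form V (F+3) (F+4))
      (GEq (GVar x) (GMul (GMul (GMul (GVar F) (GVar (F+1))) (GVar (F+2))) (GVar (F+3)))))))))))"

lemma nat_form_sem:
  assumes "wr_params V e" "Suc V < F" "x < F"
  shows "wr_sat e (nat_form V x F) \<longleftrightarrow> e x \<in> range enc"
  using assms by (simp add: nat_form_def square_form_sem wr_params_def nat_rel_def flip: nat_rel_iff)

definition bin_form :: "gform \<Rightarrow> gform \<Rightarrow> gform \<Rightarrow> nat \<Rightarrow> gform" where
  "bin_form S T R F = GEx F (GEx (Suc F) (GConj S (GConj T R)))"

lemma bin_form_sem:
  assumes S: "\<And>x y. x \<in> U \<Longrightarrow> y \<in> U \<Longrightarrow> gsat U m (e(F := x, Suc F := y)) S \<longleftrightarrow> x = u"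
    and T: "\<And>x y. x \<in> U \<Longrightarrow> y \<in> U \<Longrightarrow> gsat U m (e(F := x, Suc F := y)) T \<longleftrightarrow> y = v"
    and "u \<in> U" "v \<in> U"
  shows "gsat U m e (bin_form S T R F) \<longleftrightarrow> gsat U m (e(F := u, Suc F := v)) R"
proof -
  have "gsat U m e (bin_form S T R F) \<longleftrightarrow>
      (\<exists>x\<in>U. \<exists>y\<in>U. gsat U m (e(F := x, Suc F := y)) S \<and> gsat U m (e(F := x, Suc F := y)) T
        \<and> gsat U m (e(F := x, Suc F := y)) R)"
    by (simp add: bin_form_def)
  also have "\<dots> \<longleftrightarrow> gsat U m (e(F := u, Suc F := v)) R"
    using S T assms(3,4) by auto
  finally show ?thesis .
qed

text \<open>The translation of an arithmetic term t: the formula says that variable z holds the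
  code of the value of t.\<close>

fun term_form :: "nat \<Rightarrow> aterm \<Rightarrow> nat \<Rightarrow> nat \<Rightarrow> gform" where
  "term_form V (AVar i) z F = GEq (GVar z) (GVar i)"
| "term_form V (APlus s t) z F = bin_form (term_form V s F (Suc (Suc F))) (term_form V t (Suc F) (Suc (Suc F)))
     (GEq (GVar z) (GMul (GVar F) (GVar (Suc F)))) F"
| "term_form V (ATimes s t) z F = bin_form (term_form V s F (Suc (Suc F))) (term_form V t (Suc F) (Suc (Suc F)))
     (mul_form V F (Suc F) z (Suc (Suc F))) F"

text \<open>Correctness of the translation of t under an arbitrary placement of the result variable
  and of the auxiliary variables; stated as a predicate so that it can serve as induction
  hypothesis in the compound cases.\<close>

definition term_correct :: "nat \<Rightarrow> (nat \<Rightarrow> nat) \<Rightarrow> aterm \<Rightarrow> bool" where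
  "term_correct V \<nu> t \<longleftrightarrow> (\<forall>e z F. encodes V \<nu> e \<and> wr_params V e \<and> Suc V < F \<and> z < F
     \<and> e z \<in> carrier wr_ZZ \<longrightarrow> (wr_sat e (term_form V t z F) \<longleftrightarrow> e z = enc (aeval \<nu> t)))"

lemma term_pair_sem:
  assumes s: "term_correct V \<nu> s" and t: "term_correct V \<nu> t"
    and e: "encodes V \<nu> e" "wr_params V e" "Suc V < F"
  shows "wr_sat e (bin_form (term_form V s F (Suc (Suc F))) (term_form V t (Suc F) (Suc (Suc F))) R F)
    \<longleftrightarrow> wr_sat (e(F := enc (aeval \<nu> s), Suc F := enc (aeval \<nu> t))) R"
proof (rule bin_form_sem)
  fix x y
  have "encodes V \<nu> (e(F := x, Suc F := y))" "wr_params V (e(F := x, Suc F := y))"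
    using e by (auto simp: encodes_def wr_params_def)
  moreover assume "x \<in> carrier wr_ZZ" "y \<in> carrier wr_ZZ"
  ultimately show "wr_sat (e(F := x, Suc F := y)) (term_form V s F (Suc (Suc F))) \<longleftrightarrow> x = enc (aeval \<nu> s)"
    and "wr_sat (e(F := x, Suc F := y)) (term_form V t (Suc F) (Suc (Suc F))) \<longleftrightarrow> y = enc (aeval \<nu> t)"
    using s t e(3) unfolding term_correct_def by auto
qed (simp_all add: enc_carrier)

lemma term_form_correct: "avars_t t \<subseteq> {..<V} \<Longrightarrow> term_correct V \<nu> t"
proof (induction t)
  case (AVar i)
  then show ?case by (auto simp: term_correct_def encodes_def)
next
  case (APlus s t)
  then show ?case
    by (auto simp: term_correct_def term_pair_sem enc_mult)
next
  case (ATimes s t)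
  then show ?case
    by (auto simp: term_correct_def term_pair_sem mul_form_sem wr_params_def mul_rel_enc)
qed

text \<open>All variables of an arithmetic formula, bound or free; the translation needs them to
  stay below V.\<close>

fun avars :: "aform \<Rightarrow> nat set" where
  "avars (AEq s t) = avars_t s \<union> avars_t t"
| "avars (ANeg \<phi>) = avars \<phi>"
| "avars (AConj \<phi> \<psi>) = avars \<phi> \<union> avars \<psi>"
| "avars (AEx i \<phi>) = insert i (avars \<phi>)"

lemma finite_avars: "finite (avars \<phi>)"
proof -
  have "finite (avars_t t)" for t by (induction t) auto
  then show ?thesis by (induction \<phi>) auto
qed

fun form_tr :: "nat \<Rightarrow> aform \<Rightarrow> nat \<Rightarrow> gform" where
  "form_tr V (AEq s t) F = GEx F (GConj (term_form V s F (Suc F)) (term_form V t F (Suc F)))"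
| "form_tr V (ANeg \<phi>) F = GNeg (form_tr V \<phi> F)"
| "form_tr V (AConj \<phi> \<psi>) F = GConj (form_tr V \<phi> F) (form_tr V \<psi> F)"
| "form_tr V (AEx i \<phi>) F = GEx i (GConj (nat_form V i F) (form_tr V \<phi> F))"

lemma form_tr_sem:
  assumes "encodes V \<nu> e" "wr_params V e" "avars \<phi> \<subseteq> {..<V}" "Suc V < F"
  shows "wr_sat e (form_tr V \<phi> F) \<longleftrightarrow> asat \<nu> \<phi>"
  using assms
proof (induction \<phi> arbitrary: \<nu> e)
  case (AEq s t)
  have "encodes V \<nu> (e(F := x))" "wr_params V (e(F := x))" for x
    using AEq.prems by (auto simp: encodes_def wr_params_def)
  then have "wr_sat (e(F := x)) (term_form V s F (Suc F)) \<longleftrightarrow> x = enc (aeval \<nu> s)"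
      "wr_sat (e(F := x)) (term_form V t F (Suc F)) \<longleftrightarrow> x = enc (aeval \<nu> t)"
    if "x \<in> carrier wr_ZZ" for x
    using term_form_correct[of s V \<nu>] term_form_correct[of t V \<nu>] AEq.prems that
    unfolding term_correct_def by auto
  then show ?case by (auto simp: enc_carrier inj_enc inj_eq)
next
  case (AEx i \<phi>)
  have i: "i < V" using AEx.prems by simp
  have enc_upd: "encodes V (\<nu>(i := n)) (e(i := enc n))" for n
    using AEx.prems by (auto simp: encodes_def)
  have params: "wr_params V (e(i := x))" for x
    using AEx.prems i by (simp add: wr_params_def)
  have IH: "wr_sat (e(i := enc n)) (form_tr V \<phi> F) \<longleftrightarrow> asat (\<nu>(i := n)) \<phi>" for n
    by (rule AEx.IH[OF enc_upd params]) (use AEx.prems in auto)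
  have nat: "wr_sat (e(i := x)) (nat_form V i F) \<longleftrightarrow> x \<in> range enc" for x
    using nat_form_sem[OF params] AEx.prems i by simp
  have "wr_sat e (form_tr V (AEx i \<phi>) F)
      \<longleftrightarrow> (\<exists>x\<in>carrier wr_ZZ. x \<in> range enc \<and> wr_sat (e(i := x)) (form_tr V \<phi> F))"
    by (simp add: nat)
  also have "\<dots> \<longleftrightarrow> (\<exists>n. wr_sat (e(i := enc n)) (form_tr V \<phi> F))"
    using enc_carrier by blast
  finally show ?case by (simp add: IH)
qed auto

fun tuple_form :: "nat \<Rightarrow> nat \<Rightarrow> nat \<Rightarrow> gform" where
  "tuple_form V F 0 = GEq (GVar V) (GVar V)"
| "tuple_form V F (Suc j) = GConj (tuple_form V F j) (nat_form V j F)"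

lemma tuple_form_sem:
  assumes "wr_params V e" "Suc V < F" "k \<le> F"
  shows "wr_sat e (tuple_form V F k) \<longleftrightarrow> (\<forall>i<k. e i \<in> range enc)"
  using assms(3) by (induction k) (auto simp: nat_form_sem[OF assms(1,2)] less_Suc_eq)

theorem wr_defines_arith:
  "group_definable_params (carrier wr_ZZ) (mult wr_ZZ) k
     (map enc ` {ns. length ns = k \<and> asat (\<lambda>i. if i < k then ns ! i else 0) \<phi>})"
proof -
  obtain V0 where "avars \<phi> \<subseteq> {..<V0}"
    using finite_avars[of \<phi>] by (auto simp: finite_nat_set_iff_bounded)
  then obtain V where V: "k \<le> V" "avars \<phi> \<subseteq> {..<V}"
    by (intro that[of "max k V0"]) auto
  define F where "F = Suc (Suc V)"
  define p where "p i = (if i = V then wr_a else if i = Suc V then wr_b else enc 0)" for i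
  define \<psi> where "\<psi> = GConj (tuple_form V F k) (form_tr V \<phi> F)"
  define E where "E xs = (\<lambda>i. if i < k then xs ! i else p i)" for xs
  define \<nu> where "\<nu> ns = (\<lambda>i. if i < k then ns ! i else 0)" for ns :: "nat list"
  have p_car: "range p \<subseteq> carrier wr_ZZ"
    by (auto simp: p_def wr_a_def wr_b_def enc_carrier wr_carrier finsupp_def)
  have params: "wr_params V (E xs)" for xs
    using V(1) by (simp add: wr_params_def E_def p_def)
  have codes: "encodes V (\<nu> ns) (E (map enc ns))" if "length ns = k" for ns
    using that by (auto simp: encodes_def E_def p_def \<nu>_def)
  have sem: "wr_sat (E (map enc ns)) \<psi> \<longleftrightarrow> asat (\<nu> ns) \<phi>" if "length ns = k" for ns
    using that tuple_form_sem[OF params] form_tr_sem[OF codes[OF that] params V(2)] V(1)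
    by (simp add: \<psi>_def F_def E_def)
  have "{xs. length xs = k \<and> set xs \<subseteq> carrier wr_ZZ \<and> wr_sat (E xs) \<psi>}
      = map enc ` {ns. length ns = k \<and> asat (\<nu> ns) \<phi>}"
  proof (intro equalityI subsetI)
    fix xs assume xs: "xs \<in> {xs. length xs = k \<and> set xs \<subseteq> carrier wr_ZZ \<and> wr_sat (E xs) \<psi>}"
    then have "\<forall>i<k. xs ! i \<in> range enc"
      using tuple_form_sem[OF params] V(1) by (simp add: \<psi>_def F_def E_def)
    moreover have "length xs = k" using xs by simp
    ultimately have "\<forall>x\<in>set xs. \<exists>n. x = enc n" by (metis in_set_conv_nth rangeE)
    then obtain ns where "xs = map enc ns" unfolding ex_map_conv[symmetric] by blast
    then show "xs \<in> map enc ` {ns. length ns = k \<and> asat (\<nu> ns) \<phi>}" using xs sem by auto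
  qed (auto simp: sem enc_carrier)
  then show ?thesis unfolding group_definable_params_def E_def \<nu>_def
    using p_car by (intro exI[of _ \<psi>] exI[of _ p]) simp
qed

theorem lemma5p1:
  shows "interprets_arith_params (carrier wr_ZZ) (mult wr_ZZ) 1
           {[wr_a [^]\<^bsub>wr_ZZ\<^esub> (n::nat)] | n. True}
           (\<lambda>xs. THE n::nat. xs = [wr_a [^]\<^bsub>wr_ZZ\<^esub> n])"
proof -
  have "range enc \<subseteq> carrier wr_ZZ" using enc_carrier by blast
  then have "interprets_arith_params (carrier wr_ZZ) (mult wr_ZZ) 1
      {[enc n] | n. True} (\<lambda>xs. THE n. xs = [enc n])"
    by (rule interprets_by_encoding[OF inj_enc _ wr_defines_arith])
  then show ?thesis unfolding wr_a_pow .
qed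

end
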